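(* Suppose that $f$ is a non-negative $C^2$ function on $[-2\ell,2\ell]\subset\mathbb{R}$ satisfying $f''\ge f-a$ for some constant $a>0$. If $\max_{[-\ell,\ell]}f\ge2a$, then $\int_{-2\ell}^{2\ell}f\ge2\sqrt2\,a\sinh(\ell/\sqrt2)$.
   Context: $\ell>0$. *)

theory Defs
  imports "HOL-Analysis.Analysis"
begin

end

theory Submission
  imports Defs
begin

text \<open>
  Let \<open>x\<^sub>0 \<in> [-l, l]\<close> be a maximiser of \<open>f\<close> there and
  \<open>u t = f (x\<^sub>0 + t) + f (x\<^sub>0 - t) - 2a\<close>.  Then \<open>u'' \<ge> u\<close>, \<open>u' 0 = 0\<close> and
  \<open>u 0 \<ge> 2a\<close>, and a comparison argument for \<open>u'' - u = (D - 1)(D + 1) u\<close>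
  gives \<open>u t \<ge> u 0 cosh t\<close> on \<open>[0, l]\<close>.  Hence
  \<open>f (x\<^sub>0 + t) + f (x\<^sub>0 - t) \<ge> 2a cosh t \<ge> 2a cosh (t/\<surd>2)\<close>, and integrating over
  \<open>t \<in> [0, l]\<close> bounds the integral of the non-negative \<open>f\<close> over
  \<open>[x\<^sub>0 - l, x\<^sub>0 + l] \<subseteq> [-2l, 2l]\<close> from below.
\<close>

lemma DERIV_nonneg_imp_mono_within_Icc:
  fixes g g' :: "real \<Rightarrow> real"
  assumes deriv: "\<And>x. x \<in> {a..b} \<Longrightarrow> (g has_real_derivative g' x) (at x within {a..b})"
    and nonneg: "\<And>x. x \<in> {a..b} \<Longrightarrow> g' x \<ge> 0"
    and "a \<le> x" "x \<le> y" "y \<le> b"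
  shows "g x \<le> g y"
proof (rule DERIV_nonneg_imp_increasing_open[OF \<open>x \<le> y\<close>])
  fix t assume t: "x < t" "t < y"
  then have "at t within {a..b} = at t"
    using assms by (intro at_within_Icc_at) auto
  then show "\<exists>z. DERIV g t :> z \<and> z \<ge> 0"
    using deriv[of t] nonneg[of t] t assms by auto
next
  have "continuous_on {a..b} g"
    by (rule DERIV_continuous_on) (use deriv in blast)
  then show "continuous_on {x..y} g"
    by (rule continuous_on_subset) (use assms in auto)
qed

lemma DERIV_shift_within:
  fixes g g' :: "real \<Rightarrow> real"
  assumes deriv: "\<And>x. x \<in> S \<Longrightarrow> (g has_real_derivative g' x) (at x within S)"
    and "(\<lambda>t. c + t) ` T \<subseteq> S" and "t \<in> T"
  shows "((\<lambda>t. g (c + t)) has_real_derivative g' (c + t)) (at t within T)"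
proof -
  have "(g has_real_derivative g' (c + t)) (at (c + t) within (\<lambda>t. c + t) ` T)"
    by (rule DERIV_subset[OF deriv]) (use assms in auto)
  moreover have "((\<lambda>t. c + t) has_real_derivative 1) (at t within T)"
    using DERIV_add[OF DERIV_const DERIV_ident, of c t T] by simp
  ultimately show ?thesis
    using DERIV_image_chain by (fastforce simp: o_def)
qed

lemma DERIV_reflect_within:
  fixes g g' :: "real \<Rightarrow> real"
  assumes deriv: "\<And>x. x \<in> S \<Longrightarrow> (g has_real_derivative g' x) (at x within S)"
    and "(\<lambda>t. c - t) ` T \<subseteq> S" and "t \<in> T"
  shows "((\<lambda>t. g (c - t)) has_real_derivative - g' (c - t)) (at t within T)"
proof -
  have "(g has_real_derivative g' (c - t)) (at (c - t) within (\<lambda>t. c - t) ` T)"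
    by (rule DERIV_subset[OF deriv]) (use assms in auto)
  moreover have "((\<lambda>t. c - t) has_real_derivative -1) (at t within T)"
    using DERIV_diff[OF DERIV_const DERIV_ident, of c t T] by simp
  ultimately show ?thesis
    using DERIV_image_chain by (fastforce simp: o_def)
qed

text \<open>
  Factoring \<open>D\<^sup>2 - 1 = (D - 1)(D + 1)\<close>: with \<open>v = u - u 0 cosh\<close>, first
  \<open>exp (-t) (v' + v)\<close> and then \<open>exp t v\<close> are nondecreasing and vanish at \<open>0\<close>.
\<close>

lemma second_deriv_ge_imp_ge_cosh:
  fixes u u' u'' :: "real \<Rightarrow> real"
  assumes d1: "\<And>t. t \<in> {0..l} \<Longrightarrow> (u has_real_derivative u' t) (at t within {0..l})"
    and d2: "\<And>t. t \<in> {0..l} \<Longrightarrow> (u' has_real_derivative u'' t) (at t within {0..l})"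
    and ge: "\<And>t. t \<in> {0..l} \<Longrightarrow> u'' t \<ge> u t"
    and u'0: "u' 0 = 0"
    and t: "t \<in> {0..l}"
  shows "u 0 * cosh t \<le> u t"
proof -
  define c where "c = u 0"
  define p where "p t = exp (-t) * (u' t + u t - c * (sinh t + cosh t))" for t
  define q where "q t = exp t * (u t - c * cosh t)" for t
  have dp: "(p has_real_derivative exp (-s) * (u'' s - u s)) (at s within {0..l})"
    if "s \<in> {0..l}" for s
    unfolding p_def
    by (rule derivative_eq_intros d1 d2 that refl | simp add: algebra_simps)+
  have p_nonneg: "p s \<ge> 0" if "s \<in> {0..l}" for s
  proof -
    have "p 0 \<le> p s"
      by (rule DERIV_nonneg_imp_mono_within_Icc[OF dp]) (use ge that in auto)
    then show ?thesis by (simp add: p_def c_def u'0)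
  qed
  have dq: "(q has_real_derivative exp s * (u' s + u s - c * (sinh s + cosh s))) (at s within {0..l})"
    if "s \<in> {0..l}" for s
    unfolding q_def
    by (rule derivative_eq_intros d1 that refl | simp add: algebra_simps)+
  have "q 0 \<le> q t"
  proof (rule DERIV_nonneg_imp_mono_within_Icc[OF dq])
    fix s assume "s \<in> {0..l}"
    then show "exp s * (u' s + u s - c * (sinh s + cosh s)) \<ge> 0"
      using p_nonneg[of s] by (simp add: p_def zero_le_mult_iff)
  qed (use t in auto)
  then show ?thesis by (simp add: q_def c_def zero_le_mult_iff)
qed

lemma integral_ge_by_symmetric_sum:
  fixes f g G :: "real \<Rightarrow> real"
  assumes cont: "continuous_on {x0 - l..x0 + l} f"
    and dG: "\<And>t. t \<in> {0..l} \<Longrightarrow> (G has_real_derivative g t) (at t within {0..l})"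
    and G0: "G 0 = 0"
    and ge: "\<And>t. t \<in> {0..l} \<Longrightarrow> g t \<le> f (x0 + t) + f (x0 - t)"
    and "l \<ge> 0"
  shows "G l \<le> integral {x0 - l..x0 + l} f"
proof -
  define F where "F x = integral {x0 - l..x} f" for x
  have dF: "(F has_real_derivative f x) (at x within {x0 - l..x0 + l})"
    if "x \<in> {x0 - l..x0 + l}" for x
    unfolding F_def by (rule integral_has_real_derivative[OF cont that])
  have shift: "(\<lambda>t. x0 + t) ` {0..l} \<subseteq> {x0 - l..x0 + l}"
    and reflect: "(\<lambda>t. x0 - t) ` {0..l} \<subseteq> {x0 - l..x0 + l}"
    by auto
  define K where "K t = F (x0 + t) - F (x0 - t) - G t" for t
  have dK: "(K has_real_derivative f (x0 + t) - - f (x0 - t) - g t) (at t within {0..l})"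
    if "t \<in> {0..l}" for t
    unfolding K_def
    by (intro DERIV_diff DERIV_shift_within[OF dF shift that]
        DERIV_reflect_within[OF dF reflect that] dG that)
  have "K 0 \<le> K l"
    by (rule DERIV_nonneg_imp_mono_within_Icc[OF dK]) (use ge \<open>l \<ge> 0\<close> in auto)
  then show ?thesis by (simp add: K_def F_def G0)
qed

lemma symmetric_sum_ge_cosh:
  fixes f f' f'' :: "real \<Rightarrow> real"
  assumes d1: "\<And>x. x \<in> S \<Longrightarrow> (f has_real_derivative f' x) (at x within S)"
    and d2: "\<And>x. x \<in> S \<Longrightarrow> (f' has_real_derivative f'' x) (at x within S)"
    and ineq: "\<And>x. x \<in> S \<Longrightarrow> f'' x \<ge> f x - a"
    and shift: "(\<lambda>t. x0 + t) ` {0..l} \<subseteq> S"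
    and reflect: "(\<lambda>t. x0 - t) ` {0..l} \<subseteq> S"
    and t: "t \<in> {0..l}"
  shows "2 * (f x0 - a) * cosh t \<le> f (x0 + t) + f (x0 - t) - 2*a"
proof -
  have du: "((\<lambda>t. f (x0 + t) + f (x0 - t) - 2*a) has_real_derivative f' (x0 + t) - f' (x0 - t))
      (at t within {0..l})" if "t \<in> {0..l}" for t
    using DERIV_diff[OF DERIV_add[OF DERIV_shift_within[OF d1 shift that]
        DERIV_reflect_within[OF d1 reflect that]] DERIV_const[of "2*a"]] by simp
  have du': "((\<lambda>t. f' (x0 + t) - f' (x0 - t)) has_real_derivative f'' (x0 + t) + f'' (x0 - t))
      (at t within {0..l})" if "t \<in> {0..l}" for t
    using DERIV_diff[OF DERIV_shift_within[OF d2 shift that]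
        DERIV_reflect_within[OF d2 reflect that]] by simp
  have "f (x0 + t) + f (x0 - t) - 2*a \<le> f'' (x0 + t) + f'' (x0 - t)" if "t \<in> {0..l}" for t
  proof -
    have "x0 + t \<in> S" "x0 - t \<in> S"
      using shift reflect that by blast+
    then show ?thesis using ineq[of "x0 + t"] ineq[of "x0 - t"] by linarith
  qed
  from second_deriv_ge_imp_ge_cosh[OF du du' this _ t] show ?thesis by simp
qed

theorem lemmaB4:
  fixes f f' f'' :: "real \<Rightarrow> real" and l a :: real
  assumes l_pos: "l > 0"
    and a_pos: "a > 0"
    and d1: "\<And>x. x \<in> {-2*l..2*l} \<Longrightarrow> (f has_real_derivative f' x) (at x within {-2*l..2*l})"
    and d2: "\<And>x. x \<in> {-2*l..2*l} \<Longrightarrow> (f' has_real_derivative f'' x) (at x within {-2*l..2*l})"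
    and cont2: "continuous_on {-2*l..2*l} f''"
    and nonneg: "\<And>x. x \<in> {-2*l..2*l} \<Longrightarrow> f x \<ge> 0"
    and ineq: "\<And>x. x \<in> {-2*l..2*l} \<Longrightarrow> f'' x \<ge> f x - a"
    and maxbig: "(SUP x\<in>{-l..l}. f x) \<ge> 2*a"
  shows "integral {-2*l..2*l} f \<ge> 2 * sqrt 2 * a * sinh (l / sqrt 2)"
proof -
  have cont: "continuous_on {-2*l..2*l} f"
    by (rule DERIV_continuous_on) (use d1 in blast)
  have "continuous_on {-l..l} f"
    by (rule continuous_on_subset[OF cont]) (use l_pos in auto)
  then obtain x0 where x0: "x0 \<in> {-l..l}" and max: "\<And>y. y \<in> {-l..l} \<Longrightarrow> f y \<le> f x0"
    using continuous_attains_sup[of "{-l..l}" f] l_pos by fastforce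
  have "(SUP x\<in>{-l..l}. f x) = f x0" by (rule cSup_eq_maximum) (use x0 max in auto)
  with maxbig have fx0: "f x0 \<ge> 2*a" by simp
  have shift: "(\<lambda>t. x0 + t) ` {0..l} \<subseteq> {-2*l..2*l}"
    and reflect: "(\<lambda>t. x0 - t) ` {0..l} \<subseteq> {-2*l..2*l}"
    using x0 by auto
  have cosh_bound: "2 * (f x0 - a) * cosh t \<le> f (x0 + t) + f (x0 - t) - 2*a"
    if "t \<in> {0..l}" for t
    using d1 d2 ineq shift reflect that by (rule symmetric_sum_ge_cosh)
  have sum_bound: "2 * a * cosh (t / sqrt 2) \<le> f (x0 + t) + f (x0 - t)" if "t \<in> {0..l}" for t
  proof -
    have "t * 1 \<le> t * sqrt 2"
      using that by (intro mult_left_mono) auto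
    then have "cosh (t / sqrt 2) \<le> cosh t"
      using that by (subst cosh_real_nonneg_le_iff) (auto simp: divide_le_eq)
    moreover have "2 * a * cosh t \<le> 2 * (f x0 - a) * cosh t"
      using fx0 by (intro mult_right_mono) auto
    ultimately show ?thesis
      using cosh_bound[OF that] a_pos by (smt (verit) mult_left_mono)
  qed
  have "((\<lambda>t. 2 * sqrt 2 * a * sinh (t / sqrt 2)) has_real_derivative 2 * a * cosh (t / sqrt 2))
      (at t within {0..l})" for t
    by (rule derivative_eq_intros refl | simp)+
  then have "2 * sqrt 2 * a * sinh (l / sqrt 2) \<le> integral {x0 - l..x0 + l} f"
    using sum_bound x0 l_pos
    by (intro integral_ge_by_symmetric_sum[OF continuous_on_subset[OF cont]]) auto
  also have "\<dots> \<le> integral {-2*l..2*l} f"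
    using x0 nonneg by (intro integral_subset_le integrable_continuous_interval
        continuous_on_subset[OF cont]) auto
  finally show ?thesis .
qed

end
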